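(* Identify the Fourier variable $(\xi_1,\xi_2)\in\mathbb{R}^2$ with $\xi = \xi_1 + i\xi_2 \in \mathbb{C}$ and the space variable $(x,y)$ with $z = x+iy$. Then $$\mathcal{F}^{-1}\left( \frac{1}{\xi} e^{-|\xi|^{2}} \right) = \frac{i}{x+iy}\left( 1 - e^{-(x^2+y^2)/4} \right),$$ and, for every integer $n \ge 0$, $$\mathcal{F}^{-1}\left( \frac{\overline{\xi}^{\,n}}{\xi} e^{-|\xi|^{2}} \right) = i(2i)^{n}\frac{n!}{z^{n+1}}\left\{ 1 - \exp\left(-\frac{|z|^{2}}{4}\right)\sum_{k=0}^{n}\frac{1}{k!}\left(\frac{z\bar z}{4}\right)^{k} \right\},$$ which is equivalent to $$\mathcal{F}^{-1}\left( \frac{\overline{\xi}^{\,n}}{\xi} e^{-|\xi|^{2}} \right) = i(2i)^{n}\, n!\, \exp\left(-\frac{|z|^{2}}{4}\right)\left(\frac{\bar z}{4}\right)^{n+1}\sum_{k=0}^{\infty}\frac{1}{(k+n+1)!}\left(\frac{z\bar z}{4}\right)^{k}.$$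
   Context: The Fourier transform and its inverse are normalized as $\mathcal{F}(f)(\xi) = \frac{1}{2\pi}\int_{\mathbb{R}^2} f(x,y) e^{-i\xi_1 x - i\xi_2 y}\,dx\,dy$ and $\mathcal{F}^{-1}(\hat f)(x,y) = \frac{1}{2\pi}\int_{\mathbb{R}^2} \hat f(\xi_1,\xi_2) e^{i\xi_1 x + i\xi_2 y}\,d\xi_1\,d\xi_2$. Here $|\xi|^2 = \xi_1^2+\xi_2^2$, $\overline{\xi} = \xi_1 - i\xi_2$, and $|z|^2 = z\bar z = x^2+y^2$. The functions $\overline{\xi}^{\,n}e^{-|\xi|^2}/\xi$ are integrable on $\mathbb{R}^2$, so the inverse Fourier transforms are defined as absolutely convergent integrals. *)

theory Defs
  imports "HOL-Analysis.Analysis"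
begin

definition inv_fourier2 :: "(real \<times> real \<Rightarrow> complex) \<Rightarrow> real \<Rightarrow> real \<Rightarrow> complex" where
  "inv_fourier2 g x y =
     complex_of_real (1 / (2 * pi)) *
     integral\<^sup>L lborel (\<lambda>(\<xi>1, \<xi>2). g (\<xi>1, \<xi>2) * exp (\<i> * complex_of_real (\<xi>1 * x + \<xi>2 * y)))"

definition symb :: "nat \<Rightarrow> real \<times> real \<Rightarrow> complex" where
  "symb n = (\<lambda>(\<xi>1, \<xi>2). cnj (Complex \<xi>1 \<xi>2) ^ n / Complex \<xi>1 \<xi>2
                          * complex_of_real (exp (- (\<xi>1\<^sup>2 + \<xi>2\<^sup>2))))"

end

(*
  Since conj(xi)^n / xi = conj(xi)^(n+1) / |xi|^2 and exp(-|xi|^2) / |xi|^2 is the integral of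
  exp(-t |xi|^2) over t > 1, Fubini's theorem writes the inverse Fourier transform of the symbol
  as an integral over t > 1 of the inverse Fourier transforms of conj(xi)^(n+1) exp(-t |xi|^2).
  These Gaussian moments are read off from the generating function

    integral of exp(w conj(xi) + i <xi, (x, y)> - t |xi|^2) = pi/t exp(-|z|^2/(4t)) exp(i w conj(z)/(2t)),

  which splits into two one-dimensional complex Gaussian integrals.  What remains is the integral
  of exp(-a/t) / t^(n+2) over t > 1 with a = |z|^2/4, an incomplete Gamma integral equal to
  n!/a^(n+1) (1 - exp(-a) sum_{k<=n} a^k/k!); expanding exp(a) gives the series form.
*)
theory Submission
  imports Defs "HOL-Probability.Probability"
begin

section \<open>Termwise integration of the exponential series\<close>

lemma exp_converges_divide:
  fixes z :: "'a :: {real_normed_field, banach}"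
  shows "(\<lambda>k. z ^ k / fact k) sums exp z"
proof -
  have "z ^ k /\<^sub>R fact k = z ^ k / fact k" for k
    by (simp add: scaleR_conv_of_real divide_inverse mult.commute)
  then show ?thesis
    using exp_converges[of z] by simp
qed

lemma sum_power_div_fact_le_exp:
  fixes x :: real
  assumes "0 \<le> x"
  shows "(\<Sum>k<N. x ^ k / fact k) \<le> exp x"
proof -
  have exp_sums: "(\<lambda>k. x ^ k / fact k) sums exp x"
    by (rule exp_converges_divide)
  have "(\<Sum>k<N. x ^ k / fact k) \<le> (\<Sum>k. x ^ k / fact k)"
    using assms sums_summable[OF exp_sums] by (intro sum_le_suminf) auto
  then show ?thesis
    using sums_unique[OF exp_sums] by simp
qed

lemma power_le_fact_mult_exp:
  fixes t :: real
  assumes "0 \<le> t"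
  shows "t ^ m \<le> fact m * exp t"
proof -
  have "t ^ m / fact m \<le> (\<Sum>k<Suc m. t ^ k / fact k)"
    using assms by (intro member_le_sum) auto
  also have "\<dots> \<le> exp t"
    by (rule sum_power_div_fact_le_exp[OF assms])
  finally show ?thesis
    by (simp add: field_simps)
qed

lemma norm_sum_power_div_fact_le_exp_norm:
  fixes w :: "'a :: real_normed_field"
  shows "norm (\<Sum>k<N. w ^ k / fact k) \<le> exp (norm w)"
proof -
  have "norm (\<Sum>k<N. w ^ k / fact k) \<le> (\<Sum>k<N. norm w ^ k / fact k)"
    using norm_sum[of "\<lambda>k. w ^ k / fact k" "{..<N}"] by (simp add: norm_divide norm_power)
  also have "\<dots> \<le> exp (norm w)"
    by (rule sum_power_div_fact_le_exp) simp
  finally show ?thesis .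
qed

lemma
  fixes f g :: "'a \<Rightarrow> 'b :: {real_normed_field, banach, second_countable_topology}"
  assumes [measurable]: "f \<in> borel_measurable M" "g \<in> borel_measurable M"
    and dom: "integrable M (\<lambda>p. exp (norm (f p)) * norm (g p))"
  shows integrable_power_mult_of_exp_dominated: "integrable M (\<lambda>p. f p ^ k * g p)"
    and integrable_exp_mult_of_exp_dominated: "integrable M (\<lambda>p. exp (f p) * g p)"
    and sums_integral_exp_mult_of_exp_dominated:
      "(\<lambda>k. (\<integral>p. f p ^ k * g p \<partial>M) / fact k) sums (\<integral>p. exp (f p) * g p \<partial>M)"
proof -
  show moment: "integrable M (\<lambda>p. f p ^ k * g p)" for k
  proof (rule Bochner_Integration.integrable_bound)
    show "integrable M (\<lambda>p. fact k * (exp (norm (f p)) * norm (g p)))"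
      using dom by simp
    show "AE p in M. norm (f p ^ k * g p) \<le> norm (fact k * (exp (norm (f p)) * norm (g p)))"
    proof (intro AE_I2)
      fix p
      have "norm (f p) ^ k * norm (g p) \<le> (fact k * exp (norm (f p))) * norm (g p)"
        by (intro mult_right_mono power_le_fact_mult_exp) auto
      then show "norm (f p ^ k * g p) \<le> norm (fact k * (exp (norm (f p)) * norm (g p)))"
        by (simp add: norm_mult norm_power mult.assoc)
    qed
  qed measurable
  define s where "s N p = (\<Sum>k<N. f p ^ k / fact k) * g p" for N p
  have lim: "AE p in M. (\<lambda>N. s N p) \<longlonglongrightarrow> exp (f p) * g p"
  proof (intro AE_I2)
    fix p
    have "(\<lambda>k. f p ^ k / fact k) sums exp (f p)"
      by (rule exp_converges_divide)
    then show "(\<lambda>N. s N p) \<longlonglongrightarrow> exp (f p) * g p"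
      unfolding s_def sums_def by (intro tendsto_mult_right)
  qed
  have bound: "AE p in M. norm (s N p) \<le> exp (norm (f p)) * norm (g p)" for N
    using norm_sum_power_div_fact_le_exp_norm[of "f p" N for p]
    by (intro AE_I2) (simp add: s_def norm_mult mult_right_mono)
  have s_eq: "s N = (\<lambda>p. \<Sum>k<N. f p ^ k * g p / fact k)" for N
    unfolding s_def by (simp add: sum_distrib_right)
  have int_s: "integrable M (s N)" for N
    unfolding s_eq by (intro Bochner_Integration.integrable_sum integrable_divide moment)
  have "integral\<^sup>L M (s N) = (\<Sum>k<N. (\<integral>p. f p ^ k * g p \<partial>M) / fact k)" for N
    unfolding s_eq by (subst Bochner_Integration.integral_sum) (auto intro: moment)
  then show "integrable M (\<lambda>p. exp (f p) * g p)"
    and "(\<lambda>k. (\<integral>p. f p ^ k * g p \<partial>M) / fact k) sums (\<integral>p. exp (f p) * g p \<partial>M)"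
    using integrable_dominated_convergence[OF _ borel_measurable_integrable[OF int_s] dom lim bound]
      integral_dominated_convergence[OF _ borel_measurable_integrable[OF int_s] dom lim bound]
    by (simp_all add: sums_def)
qed

lemma powser_coeff_eq_0_of_sums_0:
  fixes a :: "nat \<Rightarrow> 'a :: {real_normed_field, banach}"
  assumes sums_0: "\<And>w. (\<lambda>k. a k * w ^ k) sums 0"
  shows "a k = 0"
proof (induction k rule: less_induct)
  case (less k)
  define g where "g w = (\<Sum>n. a (n + k) * w ^ n)" for w
  have tail_sums: "(\<lambda>n. a (n + k) * w ^ n) sums 0" if "w \<noteq> 0" for w
  proof -
    have "(\<lambda>n. a (n + k) * w ^ (n + k)) sums (0 - (\<Sum>i<k. a i * w ^ i))"
      by (rule sums_split_initial_segment[OF sums_0])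
    then have "(\<lambda>n. a (n + k) * w ^ (n + k)) sums 0"
      using less by simp
    then have "(\<lambda>n. a (n + k) * w ^ (n + k) / w ^ k) sums (0 / w ^ k)"
      by (rule sums_divide)
    then show ?thesis
      using that by (simp add: power_add)
  qed
  have "summable (\<lambda>n. a (n + k) * w ^ n)" for w
    using tail_sums[of w] summable_0_powser[of "\<lambda>n. a (n + k)"] by (cases "w = 0") (auto dest: sums_summable)
  then have "isCont g 0"
    unfolding g_def by (rule isCont_powser_converges_everywhere)
  moreover have "eventually (\<lambda>w. g w = 0) (at 0)"
    unfolding eventually_at_filter g_def using tail_sums by (auto simp: sums_iff)
  ultimately have "g 0 = 0"
    unfolding isCont_def using tendsto_unique[OF at_neq_bot] tendsto_eventually by blast
  then show ?case
    by (simp add: g_def)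
qed

section \<open>Gaussian integrals\<close>

lemma exp_mult_std_normal_density:
  "exp (b * t) * std_normal_density t = exp (b\<^sup>2 / 2) * normal_density b 1 t"
proof -
  have "exp (b * t) * exp (- (t\<^sup>2 / 2)) = exp (b\<^sup>2 / 2) * exp (- ((t - b)\<^sup>2 / 2))"
    unfolding exp_add[symmetric] by (rule arg_cong[where f = exp]) (simp add: power2_eq_square field_simps)
  then show ?thesis
    unfolding normal_density_def by simp
qed

lemma integrable_exp_abs_mult_std_normal_density:
  "integrable lborel (\<lambda>t. exp (b * \<bar>t\<bar>) * std_normal_density t)"
proof (rule Bochner_Integration.integrable_bound)
  show "integrable lborel
    (\<lambda>t. exp (b\<^sup>2 / 2) * normal_density b 1 t + exp ((- b)\<^sup>2 / 2) * normal_density (- b) 1 t)"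
    by auto
  show "AE t in lborel. norm (exp (b * \<bar>t\<bar>) * std_normal_density t) \<le>
     norm (exp (b\<^sup>2 / 2) * normal_density b 1 t + exp ((- b)\<^sup>2 / 2) * normal_density (- b) 1 t)"
  proof (intro AE_I2)
    fix t
    have "exp (b * \<bar>t\<bar>) * std_normal_density t
        \<le> exp (b * t) * std_normal_density t + exp ((- b) * t) * std_normal_density t"
      by (cases "t \<ge> 0") (auto intro!: add_increasing add_increasing2)
    then show "norm (exp (b * \<bar>t\<bar>) * std_normal_density t) \<le>
       norm (exp (b\<^sup>2 / 2) * normal_density b 1 t + exp ((- b)\<^sup>2 / 2) * normal_density (- b) 1 t)"
      by (simp only: exp_mult_std_normal_density[symmetric]) auto
  qed
qed auto

text \<open>The odd moments vanish and the even ones are \<open>(2j)! / (2\<^sup>j j!)\<close>, which turns the series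
  into the exponential series of \<open>c\<^sup>2 / 2\<close>.\<close>
lemma sums_std_normal_moments:
  fixes c :: complex
  shows "(\<lambda>k. c ^ k * (\<integral>t. std_normal_density t * t ^ k \<partial>lborel) / fact k) sums exp (c\<^sup>2 / 2)"
proof -
  define m where "m k = (\<integral>t. std_normal_density t * t ^ k \<partial>lborel)" for k
  have odd: "c ^ k * m k / fact k = 0" if "k \<notin> range (\<lambda>j. 2 * j)" for k
  proof -
    from that have "odd k"
      by (auto elim!: evenE)
    then obtain j where "k = 2 * j + 1"
      by (auto elim!: oddE)
    then have "m k = 0"
      unfolding m_def by (simp only: integral_std_normal_moment_odd)
    then show ?thesis
      by simp
  qed
  have "(c\<^sup>2 / 2) ^ j / fact j = c ^ (2 * j) * m (2 * j) / fact (2 * j)" for j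
  proof -
    have "m (2 * j) = fact (2 * j) / (2 ^ j * fact j)"
      unfolding m_def by (rule integral_std_normal_moment_even)
    then have "complex_of_real (m (2 * j)) / fact (2 * j) = 1 / (2 ^ j * fact j)"
      by simp
    moreover have "c ^ (2 * j) * m (2 * j) / fact (2 * j) = (c\<^sup>2) ^ j * (of_real (m (2 * j)) / fact (2 * j))"
      by (simp add: power_mult)
    ultimately show ?thesis
      by (simp add: power_divide)
  qed
  with exp_converges_divide[of "c\<^sup>2 / 2"]
  have "(\<lambda>j. c ^ (2 * j) * m (2 * j) / fact (2 * j)) sums exp (c\<^sup>2 / 2)"
    by simp
  then show ?thesis
    using sums_mono_reindex[of "\<lambda>j. 2 * j" "\<lambda>k. c ^ k * m k / fact k", OF _ odd]
    by (simp add: strict_mono_def m_def)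
qed

lemma has_bochner_integral_exp_mult_std_normal_density:
  fixes c :: complex
  shows "has_bochner_integral lborel (\<lambda>t. exp (c * t) * std_normal_density t) (exp (c\<^sup>2 / 2))"
proof -
  have dom: "integrable lborel (\<lambda>t. exp (norm (c * t)) * norm (complex_of_real (std_normal_density t)))"
    using integrable_exp_abs_mult_std_normal_density[of "norm c"] by (simp add: norm_mult)
  have moment: "(\<integral>t. (c * t) ^ k * std_normal_density t \<partial>lborel)
      = c ^ k * (\<integral>t. std_normal_density t * t ^ k \<partial>lborel)" for k
  proof -
    have "(\<lambda>t. (c * t) ^ k * complex_of_real (std_normal_density t))
        = (\<lambda>t. c ^ k * complex_of_real (std_normal_density t * t ^ k))"
      by (simp add: power_mult_distrib mult_ac)
    then show ?thesis
      by (simp only: integral_mult_right_zero integral_complex_of_real)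
  qed
  have "(\<lambda>k. (\<integral>t. (c * t) ^ k * std_normal_density t \<partial>lborel) / fact k)
      sums (\<integral>t. exp (c * t) * std_normal_density t \<partial>lborel)"
    by (rule sums_integral_exp_mult_of_exp_dominated[OF _ _ dom]) measurable
  then have "(\<integral>t. exp (c * t) * std_normal_density t \<partial>lborel) = exp (c\<^sup>2 / 2)"
    using sums_std_normal_moments[of c] by (simp only: moment sums_unique2)
  then show ?thesis
    using integrable_exp_mult_of_exp_dominated[OF _ _ dom] by (simp add: has_bochner_integral_iff)
qed

lemma exp_diff_of_real: "exp (w - complex_of_real r) = exp w * complex_of_real (exp (- r))"
  by (simp add: exp_diff exp_minus field_simps flip: exp_of_real)

lemma has_bochner_integral_exp_gaussian:
  fixes c :: complex and s :: real
  assumes s: "0 < s"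
  shows "has_bochner_integral lborel (\<lambda>t. exp (c * t - of_real (s * t\<^sup>2)))
           (sqrt (pi / s) * exp (c\<^sup>2 / (4 * s)))"
proof -
  define r where "r = sqrt (2 * s)"
  have r: "0 < r" "r\<^sup>2 = 2 * s"
    using s by (auto simp: r_def)
  have "has_bochner_integral lborel (\<lambda>t. exp (c / r * t) * std_normal_density t) (exp ((c / r)\<^sup>2 / 2))"
    by (rule has_bochner_integral_exp_mult_std_normal_density)
  then have "has_bochner_integral lborel (\<lambda>u. exp (c / r * (0 + r * u)) * std_normal_density (0 + r * u))
      (exp ((c / r)\<^sup>2 / 2) /\<^sub>R \<bar>r\<bar>)"
    using r by (subst (asm) lborel_has_bochner_integral_real_affine_iff[where c = r and t = 0]) auto
  then have "has_bochner_integral lborel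
      (\<lambda>u. sqrt (2 * pi) * (exp (c / r * (0 + r * u)) * std_normal_density (0 + r * u)))
      (sqrt (2 * pi) * (exp ((c / r)\<^sup>2 / 2) /\<^sub>R \<bar>r\<bar>))"
    by (rule has_bochner_integral_mult_right)
  then show ?thesis
  proof (rule has_bochner_integral_cong[THEN iffD1, OF refl, rotated -1])
    fix u :: real
    have "(r * u)\<^sup>2 / 2 = s * u\<^sup>2"
      using r by (simp add: power_mult_distrib)
    then show "sqrt (2 * pi) * (exp (c / r * (0 + r * u)) * std_normal_density (0 + r * u))
        = exp (c * u - of_real (s * u\<^sup>2))"
      unfolding exp_diff_of_real using r by (simp add: std_normal_density_def)
  next
    have "(complex_of_real r)\<^sup>2 = 2 * s"
      using r by (simp flip: of_real_power)
    then have "(c / r)\<^sup>2 / 2 = c\<^sup>2 / (4 * s)"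
      by (simp add: power_divide)
    moreover have "sqrt (2 * pi) * inverse \<bar>r\<bar> = sqrt (pi / s)"
    proof -
      have "sqrt (2 * pi) / r = sqrt (pi / s)"
        using s by (simp add: r_def real_sqrt_divide[symmetric])
      then show ?thesis
        using r by (simp add: divide_inverse)
    qed
    ultimately show "sqrt (2 * pi) * (exp ((c / r)\<^sup>2 / 2) /\<^sub>R \<bar>r\<bar>) = sqrt (pi / s) * exp (c\<^sup>2 / (4 * s))"
      by (simp only: scaleR_conv_of_real mult.assoc[symmetric] of_real_mult[symmetric])
  qed
qed

lemma integrable_exp_abs_gaussian:
  fixes r s :: real
  assumes s: "0 < s"
  shows "integrable lborel (\<lambda>t. exp (r * \<bar>t\<bar> - s * t\<^sup>2))"
proof (rule Bochner_Integration.integrable_bound)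
  have "integrable lborel (\<lambda>t. exp (complex_of_real b * t - of_real (s * t\<^sup>2)))" for b
    using has_bochner_integral_exp_gaussian[OF s] by (auto simp: has_bochner_integral_iff)
  from integrable_norm[OF this] have "integrable lborel (\<lambda>t. exp (b * t - s * t\<^sup>2))" for b
    by (simp add: norm_exp_eq_Re)
  then show "integrable lborel (\<lambda>t. exp (r * t - s * t\<^sup>2) + exp ((- r) * t - s * t\<^sup>2))"
    by (intro Bochner_Integration.integrable_add)
  show "AE t in lborel. norm (exp (r * \<bar>t\<bar> - s * t\<^sup>2))
      \<le> norm (exp (r * t - s * t\<^sup>2) + exp ((- r) * t - s * t\<^sup>2))"
  proof (intro AE_I2)
    fix t :: real
    show "norm (exp (r * \<bar>t\<bar> - s * t\<^sup>2)) \<le> norm (exp (r * t - s * t\<^sup>2) + exp ((- r) * t - s * t\<^sup>2))"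
      by (cases "0 \<le> t") (simp_all add: add_increasing add_increasing2)
  qed
qed measurable

lemma has_bochner_integral_lborel_prod:
  fixes f g :: "real \<Rightarrow> complex"
  assumes f: "has_bochner_integral lborel f I" and g: "has_bochner_integral lborel g J"
  shows "has_bochner_integral lborel (\<lambda>p::real \<times> real. f (fst p) * g (snd p)) (I * J)"
proof -
  have fi: "integrable lborel f" and gi: "integrable lborel g"
    and integral_f: "integral\<^sup>L lborel f = I" and integral_g: "integral\<^sup>L lborel g = J"
    using f g by (auto simp: has_bochner_integral_iff)
  have [measurable]: "f \<in> borel_measurable borel" "g \<in> borel_measurable borel"
    using borel_measurable_integrable[OF fi] borel_measurable_integrable[OF gi] by simp_all
  have int: "integrable (lborel \<Otimes>\<^sub>M lborel) (\<lambda>p. f (fst p) * g (snd p))"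
  proof (rule lborel_pair.Fubini_integrable)
    have "(\<lambda>x. \<integral>y. norm (f (fst (x, y)) * g (snd (x, y))) \<partial>lborel)
        = (\<lambda>x. norm (f x) * (\<integral>y. norm (g y) \<partial>lborel))"
      by (simp add: norm_mult)
    then show "integrable lborel (\<lambda>x. \<integral>y. norm (f (fst (x, y)) * g (snd (x, y))) \<partial>lborel)"
      using fi by simp
  qed (use gi in auto)
  have "integral\<^sup>L (lborel \<Otimes>\<^sub>M lborel) (\<lambda>p. f (fst p) * g (snd p)) = (\<integral>x. \<integral>y. f x * g y \<partial>lborel \<partial>lborel)"
    using lborel_pair.integral_fst'[OF int] by simp
  also have "\<dots> = I * J"
    by (simp add: integral_f integral_g)
  finally show ?thesis
    using int by (simp add: has_bochner_integral_iff lborel_prod)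
qed

lemma integrable_lborel_prod_real:
  fixes f g :: "real \<Rightarrow> real"
  assumes "integrable lborel f" and "integrable lborel g"
  shows "integrable lborel (\<lambda>p::real \<times> real. f (fst p) * g (snd p))"
proof -
  have "integrable lborel (\<lambda>p::real \<times> real. complex_of_real (f (fst p)) * of_real (g (snd p)))"
    using has_bochner_integral_lborel_prod[OF has_bochner_integral_integrable has_bochner_integral_integrable,
        OF integrable_of_real integrable_of_real, OF assms]
    by (simp add: has_bochner_integral_iff)
  from integrable_Re[OF this] show ?thesis
    by simp
qed

lemma integrable_exp_abs_gaussian2:
  fixes r s :: real
  assumes s: "0 < s"
  shows "integrable lborel
    (\<lambda>p::real \<times> real. exp (r * (\<bar>fst p\<bar> + \<bar>snd p\<bar>) - s * ((fst p)\<^sup>2 + (snd p)\<^sup>2)))"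
  using integrable_lborel_prod_real[OF integrable_exp_abs_gaussian[OF s] integrable_exp_abs_gaussian[OF s]]
  by (simp add: mult_exp_exp algebra_simps)

lemma borel_measurable_Complex [measurable]:
  assumes [measurable]: "f \<in> borel_measurable M" "g \<in> borel_measurable M"
  shows "(\<lambda>x. Complex (f x) (g x)) \<in> borel_measurable M"
proof -
  have "(\<lambda>x. Complex (f x) (g x)) = (\<lambda>x. f x *\<^sub>R 1 + g x *\<^sub>R \<i>)"
    by (auto simp: complex_eq_iff)
  then show ?thesis
    by simp
qed

lemma borel_measurable_cnj [measurable]:
  assumes [measurable]: "f \<in> borel_measurable M"
  shows "(\<lambda>x. cnj (f x)) \<in> borel_measurable M"
proof -
  have "(\<lambda>x. cnj (f x)) = (\<lambda>x. Complex (Re (f x)) (- Im (f x)))"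
    by (auto simp: complex_eq_iff)
  then show ?thesis
    by simp
qed

text \<open>Writing \<open>\<xi> = a + i b\<close>, the exponent is \<open>(w + i x) a + (i y - i w) b - s (a\<^sup>2 + b\<^sup>2)\<close>,
  so the integral factors into two one-dimensional Gaussian integrals.\<close>
lemma has_bochner_integral_exp_cnj_gaussian2:
  fixes w :: complex and s x y :: real
  assumes s: "0 < s"
  shows "has_bochner_integral lborel
    (\<lambda>p::real \<times> real. exp (w * cnj (Complex (fst p) (snd p))) *
       exp (\<i> * of_real (fst p * x + snd p * y) - of_real (s * ((fst p)\<^sup>2 + (snd p)\<^sup>2))))
    (complex_of_real (pi / s * exp (- (x\<^sup>2 + y\<^sup>2) / (4 * s))) * exp (w * (\<i> * cnj (Complex x y) / (2 * s))))"
proof -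
  define c1 where "c1 = w + \<i> * x"
  define c2 where "c2 = \<i> * y - \<i> * w"
  have "has_bochner_integral lborel
      (\<lambda>p::real \<times> real. exp (c1 * fst p - of_real (s * (fst p)\<^sup>2)) * exp (c2 * snd p - of_real (s * (snd p)\<^sup>2)))
      ((sqrt (pi / s) * exp (c1\<^sup>2 / (4 * s))) * (sqrt (pi / s) * exp (c2\<^sup>2 / (4 * s))))"
    by (intro has_bochner_integral_lborel_prod has_bochner_integral_exp_gaussian s)
  then show ?thesis
  proof (rule has_bochner_integral_cong[THEN iffD1, OF refl, rotated -1])
    fix p :: "real \<times> real"
    show "exp (c1 * fst p - of_real (s * (fst p)\<^sup>2)) * exp (c2 * snd p - of_real (s * (snd p)\<^sup>2))
        = exp (w * cnj (Complex (fst p) (snd p))) *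
          exp (\<i> * of_real (fst p * x + snd p * y) - of_real (s * ((fst p)\<^sup>2 + (snd p)\<^sup>2)))"
      unfolding mult_exp_exp c1_def c2_def
      by (rule arg_cong[where f = exp]) (simp add: Complex_eq algebra_simps)
  next
    have sum_squares: "c1\<^sup>2 + c2\<^sup>2 = 2 * \<i> * w * cnj (Complex x y) - of_real (x\<^sup>2 + y\<^sup>2)"
      unfolding c1_def c2_def by (simp add: complex_eq_iff power2_eq_square algebra_simps)
    have "c1\<^sup>2 / (4 * s) + c2\<^sup>2 / (4 * s)
        = (2 * \<i> * w * cnj (Complex x y) - of_real (x\<^sup>2 + y\<^sup>2)) / (4 * s)"
      by (simp only: add_divide_distrib[symmetric] sum_squares)
    also have "\<dots> = of_real (- (x\<^sup>2 + y\<^sup>2) / (4 * s)) + w * (\<i> * cnj (Complex x y) / (2 * s))"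
      using s by (simp add: field_simps)
    finally have "c1\<^sup>2 / (4 * s) + c2\<^sup>2 / (4 * s)
        = of_real (- (x\<^sup>2 + y\<^sup>2) / (4 * s)) + w * (\<i> * cnj (Complex x y) / (2 * s))" .
    then have exps: "exp (c1\<^sup>2 / (4 * s)) * exp (c2\<^sup>2 / (4 * s))
        = of_real (exp (- (x\<^sup>2 + y\<^sup>2) / (4 * s))) * exp (w * (\<i> * cnj (Complex x y) / (2 * s)))"
      by (simp only: mult_exp_exp exp_add exp_of_real)
    have roots: "complex_of_real (sqrt (pi / s)) * sqrt (pi / s) = pi / s"
      using s by (simp flip: of_real_mult)
    have "(sqrt (pi / s) * exp (c1\<^sup>2 / (4 * s))) * (sqrt (pi / s) * exp (c2\<^sup>2 / (4 * s)))
        = (complex_of_real (sqrt (pi / s)) * sqrt (pi / s)) * (exp (c1\<^sup>2 / (4 * s)) * exp (c2\<^sup>2 / (4 * s)))"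
      by (simp only: mult_ac)
    also have "\<dots> = pi / s * (exp (- (x\<^sup>2 + y\<^sup>2) / (4 * s)) * exp (w * (\<i> * cnj (Complex x y) / (2 * s))))"
      by (simp only: exps roots)
    finally show "(sqrt (pi / s) * exp (c1\<^sup>2 / (4 * s))) * (sqrt (pi / s) * exp (c2\<^sup>2 / (4 * s)))
        = complex_of_real (pi / s * exp (- (x\<^sup>2 + y\<^sup>2) / (4 * s))) * exp (w * (\<i> * cnj (Complex x y) / (2 * s)))"
      by simp
  qed
qed

lemma integrable_exp_norm_cnj_mult_gaussian2:
  fixes w :: complex and s x y :: real
  assumes s: "0 < s"
  shows "integrable lborel (\<lambda>p::real \<times> real. exp (norm (w * cnj (Complex (fst p) (snd p)))) *
    norm (exp (\<i> * of_real (fst p * x + snd p * y) - of_real (s * ((fst p)\<^sup>2 + (snd p)\<^sup>2)))))"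
proof (rule Bochner_Integration.integrable_bound)
  show "integrable lborel (\<lambda>p. exp (norm w * (\<bar>fst p\<bar> + \<bar>snd p\<bar>) - s * ((fst p)\<^sup>2 + (snd p)\<^sup>2)))"
    by (rule integrable_exp_abs_gaussian2[OF s])
  show "AE p in lborel. norm (exp (norm (w * cnj (Complex (fst p) (snd p)))) *
      norm (exp (\<i> * of_real (fst p * x + snd p * y) - of_real (s * ((fst p)\<^sup>2 + (snd p)\<^sup>2)))))
    \<le> norm (exp (norm w * (\<bar>fst p\<bar> + \<bar>snd p\<bar>) - s * ((fst p)\<^sup>2 + (snd p)\<^sup>2)))"
  proof (intro AE_I2)
    fix p :: "real \<times> real"
    have "norm w * norm (cnj (Complex (fst p) (snd p))) \<le> norm w * (\<bar>fst p\<bar> + \<bar>snd p\<bar>)"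
      using cmod_le[of "Complex (fst p) (snd p)"] by (simp add: mult_left_mono)
    then show "norm (exp (norm (w * cnj (Complex (fst p) (snd p)))) *
        norm (exp (\<i> * of_real (fst p * x + snd p * y) - of_real (s * ((fst p)\<^sup>2 + (snd p)\<^sup>2)))))
      \<le> norm (exp (norm w * (\<bar>fst p\<bar> + \<bar>snd p\<bar>) - s * ((fst p)\<^sup>2 + (snd p)\<^sup>2)))"
      by (simp add: norm_mult norm_exp_eq_Re mult_exp_exp)
  qed
qed (simp, intro borel_measurable_continuous_onI continuous_intros)

text \<open>The moments of \<open>cnj \<xi>\<close> are the Taylor coefficients in \<open>w\<close> of the generating function
  computed in has_bochner_integral_exp_cnj_gaussian2.\<close>
lemma has_bochner_integral_cnj_power_gaussian2:
  fixes x y s :: real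
  assumes s: "0 < s"
  shows "has_bochner_integral lborel
    (\<lambda>p::real \<times> real. cnj (Complex (fst p) (snd p)) ^ m *
       exp (\<i> * of_real (fst p * x + snd p * y) - of_real (s * ((fst p)\<^sup>2 + (snd p)\<^sup>2))))
    (complex_of_real (pi / s * exp (- (x\<^sup>2 + y\<^sup>2) / (4 * s))) * (\<i> * cnj (Complex x y) / (2 * s)) ^ m)"
proof -
  define X where "X p = cnj (Complex (fst p) (snd p))" for p :: "real \<times> real"
  define E where "E p = exp (\<i> * of_real (fst p * x + snd p * y) - of_real (s * ((fst p)\<^sup>2 + (snd p)\<^sup>2)))"
    for p :: "real \<times> real"
  define C where "C = complex_of_real (pi / s * exp (- (x\<^sup>2 + y\<^sup>2) / (4 * s)))"
  define \<beta> where "\<beta> = \<i> * cnj (Complex x y) / (2 * s)"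
  have [measurable]: "X \<in> borel_measurable lborel" "E \<in> borel_measurable lborel"
    unfolding X_def E_def complex_cnj_complex_of_real
    by (simp_all only: measurable_lborel2) (intro borel_measurable_continuous_onI continuous_intros)+
  have dom: "integrable lborel (\<lambda>p. exp (norm (w * X p)) * norm (E p))" for w
    unfolding X_def E_def by (rule integrable_exp_norm_cnj_mult_gaussian2[OF s])
  define P where "P k = (\<integral>p. X p ^ k * E p \<partial>lborel)" for k
  have "(\<lambda>k. (\<integral>p. (w * X p) ^ k * E p \<partial>lborel) / fact k) sums (\<integral>p. exp (w * X p) * E p \<partial>lborel)" for w
    by (rule sums_integral_exp_mult_of_exp_dominated[OF _ _ dom]) measurable
  moreover have "(\<integral>p. (w * X p) ^ k * E p \<partial>lborel) = w ^ k * P k" for w k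
    unfolding P_def power_mult_distrib mult.assoc by (rule integral_mult_right_zero)
  moreover have "(\<integral>p. exp (w * X p) * E p \<partial>lborel) = C * exp (w * \<beta>)" for w
    using has_bochner_integral_exp_cnj_gaussian2[OF s, of w x y]
    unfolding X_def E_def C_def \<beta>_def by (simp add: has_bochner_integral_iff)
  ultimately have moments_sum: "(\<lambda>k. w ^ k * P k / fact k) sums (C * exp (w * \<beta>))" for w
    by simp
  have exp_sum: "(\<lambda>k. w ^ k * (C * \<beta> ^ k) / fact k) sums (C * exp (w * \<beta>))" for w
  proof -
    have "C * ((w * \<beta>) ^ k / fact k) = w ^ k * (C * \<beta> ^ k) / fact k" for k
      by (simp add: power_mult_distrib mult_ac)
    then show ?thesis
      using sums_mult[OF exp_converges_divide[of "w * \<beta>"], of C] by (simp only:)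
  qed
  have "(P k - C * \<beta> ^ k) / fact k = 0" for k
  proof (rule powser_coeff_eq_0_of_sums_0)
    fix w :: complex
    show "(\<lambda>k. (P k - C * \<beta> ^ k) / fact k * w ^ k) sums 0"
      using sums_diff[OF moments_sum[of w] exp_sum[of w]] by (simp add: field_simps)
  qed
  then have "P m = C * \<beta> ^ m"
    by simp
  moreover have "integrable lborel (\<lambda>p. X p ^ m * E p)"
    using integrable_power_mult_of_exp_dominated[OF _ _ dom[of 1]] by simp
  ultimately show ?thesis
    unfolding P_def X_def E_def C_def \<beta>_def by (simp add: has_bochner_integral_iff)
qed

section \<open>The radial integral\<close>

lemma has_bochner_integral_Ioi_FTC:
  fixes f F :: "real \<Rightarrow> real"
  assumes F: "\<And>x. 1 < x \<Longrightarrow> DERIV F x :> f x" and f: "\<And>x. 1 < x \<Longrightarrow> isCont f x"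
    and nonneg: "\<And>x. 1 < x \<Longrightarrow> 0 \<le> f x"
    and A: "(F \<longlongrightarrow> A) (at_right 1)" and B: "(F \<longlongrightarrow> B) at_top"
  shows "has_bochner_integral lborel (\<lambda>x. indicator {1<..} x * f x) (B - A)"
proof -
  have "((F \<circ> real_of_ereal) \<longlongrightarrow> A) (at_right (ereal 1))"
    and "((F \<circ> real_of_ereal) \<longlongrightarrow> B) (at_left \<infinity>)"
    using A B by (simp_all add: ereal_tendsto_simps1)
  note FTC = interval_integral_FTC_nonneg[of "ereal 1" \<infinity>, OF _ _ _ _ this]
  have "einterval (ereal 1) \<infinity> = {1<..}"
    by (auto simp: einterval_def)
  then have "integrable lborel (\<lambda>x. indicator {1<..} x * f x)"
    using FTC(1) F f nonneg by (simp add: set_integrable_def)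
  moreover have "(LBINT x=ereal 1..\<infinity>. f x) = (LINT x:{1<..}|lborel. f x)"
    by (rule interval_integral_to_infinity_eq)
  ultimately show ?thesis
    using FTC(2) F f nonneg by (simp add: has_bochner_integral_iff set_lebesgue_integral_def)
qed

lemma has_bochner_integral_exp_Ioi:
  fixes q :: real
  assumes q: "0 < q"
  shows "has_bochner_integral lborel (\<lambda>t. indicator {1<..} t * exp (- (q * t))) (exp (- q) / q)"
proof -
  define F where "F t = - exp (- (q * t)) / q" for t
  have "has_bochner_integral lborel (\<lambda>t. indicator {1<..} t * exp (- (q * t))) (0 - F 1)"
  proof (rule has_bochner_integral_Ioi_FTC)
    show "DERIV F x :> exp (- (q * x))" for x
      unfolding F_def using q by (auto intro!: derivative_eq_intros)
    have "isCont F 1"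
      unfolding F_def using q by (intro continuous_intros) auto
    then show "(F \<longlongrightarrow> F 1) (at_right 1)"
      by (simp add: isCont_def filterlim_at_split)
    have "((\<lambda>t. exp (- (q * t))) \<longlongrightarrow> 0) at_top"
      using q by (auto intro!: exp_at_bot[THEN filterlim_compose] filterlim_tendsto_pos_mult_at_top
          filterlim_ident simp: filterlim_uminus_at_bot)
    then show "(F \<longlongrightarrow> 0) at_top"
      unfolding F_def using tendsto_divide[OF tendsto_minus tendsto_const, of _ 0 at_top q] q by simp
    show "isCont (\<lambda>t. exp (- (q * t))) x" for x
      by (intro continuous_intros)
  qed simp
  then show ?thesis
    by (simp add: F_def)
qed

lemma DERIV_neg_sum_power_mult_exp:
  fixes u :: real
  shows "DERIV (\<lambda>u. - (\<Sum>m\<le>k. u ^ m * exp (- u) / fact m)) u :> u ^ k * exp (- u) / fact k"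
proof (induction k)
  case 0
  show ?case
    by (auto intro!: derivative_eq_intros)
next
  case (Suc k)
  have "DERIV (\<lambda>u. - (\<Sum>m\<le>k. u ^ m * exp (- u) / fact m) - u ^ Suc k * exp (- u) / fact (Suc k)) u :>
      u ^ k * exp (- u) / fact k - (real (Suc k) - u) * u ^ k * exp (- u) / fact (Suc k)"
    by (intro DERIV_diff Suc)
      (auto intro!: derivative_eq_intros simp del: fact_Suc power_Suc simp add: field_simps power_Suc[symmetric])
  also have "u ^ k * exp (- u) / fact k - (real (Suc k) - u) * u ^ k * exp (- u) / fact (Suc k)
      = u ^ Suc k * exp (- u) / fact (Suc k)"
    by (auto simp: field_simps simp del: fact_Suc) (simp_all add: of_nat_Suc field_simps)
  finally show ?case
    by simp
qed

text \<open>Substituting \<open>u = a / t\<close> turns this into the lower incomplete Gamma function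
  \<open>a\<^sup>-\<^sup>(\<^sup>n\<^sup>+\<^sup>1\<^sup>) \<integral>\<^sub>0\<^sup>a u\<^sup>n e\<^sup>-\<^sup>u du\<close>.\<close>
lemma has_bochner_integral_exp_div_power_Ioi:
  fixes a :: real
  assumes a: "0 < a"
  shows "has_bochner_integral lborel (\<lambda>t. indicator {1<..} t * (exp (- (a / t)) / t ^ (n + 2)))
           (fact n / a ^ (n + 1) * (1 - exp (- a) * (\<Sum>k\<le>n. a ^ k / fact k)))"
proof -
  define c where "c = fact n / a ^ (n + 1)"
  define G where "G u = - (\<Sum>m\<le>n. u ^ m * exp (- u) / fact m)" for u :: real
  define F where "F t = - c * G (a / t)" for t
  have "has_bochner_integral lborel (\<lambda>t. indicator {1<..} t * (exp (- (a / t)) / t ^ (n + 2))) (c - F 1)"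
  proof (rule has_bochner_integral_Ioi_FTC)
    fix x :: real
    assume x: "1 < x"
    have "DERIV (\<lambda>t. G (a / t)) x :> (a / x) ^ n * exp (- (a / x)) / fact n * (- (a / x\<^sup>2))"
      unfolding G_def using x
      by (intro DERIV_chain2[OF DERIV_neg_sum_power_mult_exp]) (auto intro!: derivative_eq_intros simp: power2_eq_square)
    moreover have "- c * ((a / x) ^ n * exp (- (a / x)) / fact n * (- (a / x\<^sup>2))) = exp (- (a / x)) / x ^ (n + 2)"
      using x a unfolding c_def by (simp add: field_simps power2_eq_square power_divide)
    ultimately show "DERIV F x :> exp (- (a / x)) / x ^ (n + 2)"
      unfolding F_def by (metis DERIV_cmult)
    show "isCont (\<lambda>t. exp (- (a / t)) / t ^ (n + 2)) x"
      using x by (intro continuous_intros) auto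
    show "0 \<le> exp (- (a / x)) / x ^ (n + 2)"
      using x by simp
  next
    have "isCont F 1"
      unfolding F_def G_def by (intro continuous_intros) auto
    then show "(F \<longlongrightarrow> F 1) (at_right 1)"
      by (simp add: isCont_def filterlim_at_split)
    have "((\<lambda>t. a / t) \<longlongrightarrow> 0) at_top"
      by (intro tendsto_divide_0[OF tendsto_const] filterlim_at_top_imp_at_infinity filterlim_ident)
    moreover have "isCont G 0"
      unfolding G_def by (intro continuous_intros) auto
    ultimately have "((\<lambda>t. G (a / t)) \<longlongrightarrow> G 0) at_top"
      using isCont_tendsto_compose by blast
    moreover have "G 0 = -1"
      unfolding G_def by (induction n) auto
    ultimately show "(F \<longlongrightarrow> c) at_top"
      unfolding F_def using tendsto_mult_left[of _ "-1" at_top "- c"] by simp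
  qed
  moreover have "(\<Sum>m\<le>n. a ^ m * exp (- a) / fact m) = exp (- a) * (\<Sum>k\<le>n. a ^ k / fact k)"
    by (simp add: sum_distrib_left mult_ac)
  ultimately show ?thesis
    by (simp add: F_def G_def c_def algebra_simps)
qed

lemma sums_power_div_fact_shift:
  fixes a :: real
  assumes a: "a \<noteq> 0"
  shows "(\<lambda>k. a ^ k / fact (k + n + 1)) sums ((exp a - (\<Sum>k\<le>n. a ^ k / fact k)) / a ^ (n + 1))"
proof -
  have "(\<lambda>k. a ^ k / fact k) sums exp a"
    by (rule exp_converges_divide)
  then have "(\<lambda>k. a ^ (k + Suc n) / fact (k + Suc n)) sums (exp a - (\<Sum>k<Suc n. a ^ k / fact k))"
    by (rule sums_split_initial_segment)
  then have "(\<lambda>k. a ^ (k + Suc n) / fact (k + Suc n) / a ^ (n + 1))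
      sums ((exp a - (\<Sum>k<Suc n. a ^ k / fact k)) / a ^ (n + 1))"
    by (rule sums_divide)
  moreover have "a ^ (k + Suc n) / fact (k + Suc n) / a ^ (n + 1) = a ^ k / fact (k + n + 1)" for k
    using a by (simp add: power_add)
  ultimately show ?thesis
    by (simp add: lessThan_Suc_atMost)
qed

lemma has_bochner_integral_exp_div_power_Ioi_series:
  fixes a :: real
  assumes a: "0 < a"
  shows "has_bochner_integral lborel (\<lambda>t. indicator {1<..} t * (exp (- (a / t)) / t ^ (n + 2)))
           (fact n * exp (- a) * (\<Sum>k. a ^ k / fact (k + n + 1)))"
proof -
  have "(\<Sum>k. a ^ k / fact (k + n + 1)) = (exp a - (\<Sum>k\<le>n. a ^ k / fact k)) / a ^ (n + 1)"
    using sums_power_div_fact_shift[of a n] a by (simp add: sums_iff)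
  then have "fact n * exp (- a) * (\<Sum>k. a ^ k / fact (k + n + 1))
      = fact n / a ^ (n + 1) * (1 - exp (- a) * (\<Sum>k\<le>n. a ^ k / fact k))"
    by (simp add: exp_minus field_simps)
  then show ?thesis
    using has_bochner_integral_exp_div_power_Ioi[OF a, of n] by simp
qed

section \<open>Integrability of the symbol\<close>

lemma integrable_inverse_sqrt_Icc_01:
  "integrable lborel (\<lambda>t::real. indicator {0..1} t * inverse (sqrt t))"
proof -
  have "(\<lambda>t::real. t powr (- 1 / 2)) integrable_on {0..1}"
    by (rule integrable_on_powr_from_0) auto
  then have "(\<lambda>t::real. t powr (- 1 / 2)) absolutely_integrable_on {0..1}"
    by (rule nonnegative_absolutely_integrable_1) auto
  then have "integrable lebesgue (\<lambda>t::real. indicator {0..1} t *\<^sub>R t powr (- 1 / 2))"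
    by (simp add: set_integrable_def)
  moreover have "(\<lambda>t. indicator {0..1} t *\<^sub>R t powr (- 1 / 2)) = (\<lambda>t::real. indicator {0..1} t * inverse (sqrt t))"
  proof
    fix t :: real
    show "indicator {0..1} t *\<^sub>R t powr (- 1 / 2) = indicator {0..1} t * inverse (sqrt t)"
      by (cases "0 \<le> t"; cases "t = 0") (simp_all add: indicator_def powr_minus powr_half_sqrt)
  qed
  ultimately have "integrable lebesgue (\<lambda>t::real. indicator {0..1} t * inverse (sqrt t))"
    by simp
  then show ?thesis
    by (subst (asm) integrable_completion) measurable
qed

lemma integrable_inverse_sqrt_abs_mult_gaussian:
  "integrable lborel (\<lambda>t::real. inverse (sqrt \<bar>t\<bar>) * exp (- t\<^sup>2))"
proof (rule Bochner_Integration.integrable_bound)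
  let ?k = "\<lambda>t::real. indicator {0..1} t * inverse (sqrt t)"
  have "integrable lborel (\<lambda>t::real. ?k (0 + (- 1) * t))"
    by (rule lborel_integrable_real_affine[OF integrable_inverse_sqrt_Icc_01]) simp
  moreover have "integrable lborel (\<lambda>t::real. exp (- t\<^sup>2))"
    using integrable_exp_abs_gaussian[of 1 0] by simp
  ultimately show "integrable lborel (\<lambda>t::real. ?k t + ?k (0 + (- 1) * t) + exp (- t\<^sup>2))"
    by (intro Bochner_Integration.integrable_add integrable_inverse_sqrt_Icc_01)
  show "AE t in lborel. norm (inverse (sqrt \<bar>t\<bar>) * exp (- t\<^sup>2)) \<le> norm (?k t + ?k (0 + (- 1) * t) + exp (- t\<^sup>2))"
  proof (intro AE_I2)
    fix t :: real
    have k_nonneg: "0 \<le> ?k t" "0 \<le> ?k (0 + (- 1) * t)"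
      by (auto simp: indicator_def)
    have "inverse (sqrt \<bar>t\<bar>) * exp (- t\<^sup>2) \<le> ?k t + ?k (0 + (- 1) * t) + exp (- t\<^sup>2)"
    proof (cases "\<bar>t\<bar> \<le> 1")
      case True
      have "inverse (sqrt \<bar>t\<bar>) * exp (- t\<^sup>2) \<le> inverse (sqrt \<bar>t\<bar>)"
        by (simp add: mult_left_le)
      also have "\<dots> \<le> ?k t + ?k (0 + (- 1) * t)"
        using True by (cases "0 \<le> t") (auto simp: indicator_def)
      finally show ?thesis
        by (smt (verit) exp_gt_zero)
    next
      case False
      then have "inverse (sqrt \<bar>t\<bar>) \<le> 1"
        by (simp add: inverse_le_1_iff)
      then have "inverse (sqrt \<bar>t\<bar>) * exp (- t\<^sup>2) \<le> exp (- t\<^sup>2)"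
        by (simp add: mult_left_le_one_le)
      then show ?thesis
        using k_nonneg by linarith
    qed
    then show "norm (inverse (sqrt \<bar>t\<bar>) * exp (- t\<^sup>2)) \<le> norm (?k t + ?k (0 + (- 1) * t) + exp (- t\<^sup>2))"
      using k_nonneg by simp
  qed
qed measurable

lemma inverse_sqrt_sum_squares_le:
  fixes a b :: real
  assumes "a \<noteq> 0" "b \<noteq> 0"
  shows "inverse (sqrt (a\<^sup>2 + b\<^sup>2)) \<le> inverse (sqrt \<bar>a\<bar>) * inverse (sqrt \<bar>b\<bar>)"
proof -
  have "2 * \<bar>a\<bar> * \<bar>b\<bar> \<le> a\<^sup>2 + b\<^sup>2"
    using sum_squares_bound[of "\<bar>a\<bar>" "\<bar>b\<bar>"] by simp
  then have "\<bar>a\<bar> * \<bar>b\<bar> \<le> a\<^sup>2 + b\<^sup>2"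
    using zero_le_mult_iff[of "\<bar>a\<bar>" "\<bar>b\<bar>"] by linarith
  then have "sqrt (\<bar>a\<bar> * \<bar>b\<bar>) \<le> sqrt (a\<^sup>2 + b\<^sup>2)"
    by (rule real_sqrt_le_mono)
  moreover have "0 < sqrt (\<bar>a\<bar> * \<bar>b\<bar>)"
    using assms by simp
  ultimately show ?thesis
    by (simp add: real_sqrt_mult le_imp_inverse_le flip: inverse_mult_distrib)
qed

lemma AE_lborel2_fst_snd_nonzero: "AE p in lborel. fst p \<noteq> (0::real) \<and> snd p \<noteq> (0::real)"
proof -
  have "AE p in lborel \<Otimes>\<^sub>M lborel. fst p \<noteq> (0::real) \<and> snd p \<noteq> (0::real)"
  proof (rule lborel_pair.AE_pair_measure)
    show "{p \<in> space (lborel \<Otimes>\<^sub>M lborel). fst p \<noteq> (0::real) \<and> snd p \<noteq> (0::real)} \<in> sets (lborel \<Otimes>\<^sub>M lborel)"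
      by measurable
    show "AE x in lborel. AE y in lborel. fst (x, y) \<noteq> (0::real) \<and> snd (x, y) \<noteq> (0::real)"
      using AE_lborel_singleton[of "0::real"] by eventually_elim (use AE_lborel_singleton[of "0::real"] in auto)
  qed
  then show ?thesis
    by (subst (asm) lborel_prod)
qed

text \<open>The bound \<open>1 / |\<xi>| \<le> |\<xi>\<^sub>1|\<^sup>-\<^sup>1\<^sup>/\<^sup>2 |\<xi>\<^sub>2|\<^sup>-\<^sup>1\<^sup>/\<^sup>2\<close> reduces the singularity at the origin
  to a product of integrable one-dimensional singularities.\<close>
lemma integrable_gaussian_div_norm2:
  "integrable lborel (\<lambda>p::real \<times> real. exp (- ((fst p)\<^sup>2 + (snd p)\<^sup>2)) / sqrt ((fst p)\<^sup>2 + (snd p)\<^sup>2))"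
proof (rule Bochner_Integration.integrable_bound)
  let ?g = "\<lambda>t::real. inverse (sqrt \<bar>t\<bar>) * exp (- t\<^sup>2)"
  show "integrable lborel (\<lambda>p::real \<times> real. ?g (fst p) * ?g (snd p))"
    by (intro integrable_lborel_prod_real integrable_inverse_sqrt_abs_mult_gaussian)
  show "(\<lambda>p::real \<times> real. exp (- ((fst p)\<^sup>2 + (snd p)\<^sup>2)) / sqrt ((fst p)\<^sup>2 + (snd p)\<^sup>2)) \<in> borel_measurable lborel"
    by (simp only: measurable_lborel2, intro borel_measurable_divide borel_measurable_continuous_onI continuous_intros)
  show "AE p in lborel. norm (exp (- ((fst p)\<^sup>2 + (snd p)\<^sup>2)) / sqrt ((fst p)\<^sup>2 + (snd p)\<^sup>2))
      \<le> norm (?g (fst p) * ?g (snd p))"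
    using AE_lborel2_fst_snd_nonzero
  proof eventually_elim
    fix p :: "real \<times> real"
    assume "fst p \<noteq> 0 \<and> snd p \<noteq> 0"
    then have "inverse (sqrt ((fst p)\<^sup>2 + (snd p)\<^sup>2)) * exp (- ((fst p)\<^sup>2 + (snd p)\<^sup>2))
        \<le> (inverse (sqrt \<bar>fst p\<bar>) * inverse (sqrt \<bar>snd p\<bar>)) * exp (- ((fst p)\<^sup>2 + (snd p)\<^sup>2))"
      by (intro mult_right_mono inverse_sqrt_sum_squares_le) simp_all
    then show "norm (exp (- ((fst p)\<^sup>2 + (snd p)\<^sup>2)) / sqrt ((fst p)\<^sup>2 + (snd p)\<^sup>2))
        \<le> norm (?g (fst p) * ?g (snd p))"
      by (simp add: divide_inverse exp_add[symmetric] mult_ac)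
  qed
qed

lemma symb_Pair:
  "symb n (a, b) = cnj (Complex a b) ^ n / Complex a b * exp (- (a\<^sup>2 + b\<^sup>2))"
  by (simp add: symb_def)

lemma borel_measurable_symb [measurable]: "symb n \<in> borel_measurable lborel"
proof -
  have "symb n = (\<lambda>z. cnj z ^ n / z * exp (- (cmod z)\<^sup>2)) \<circ> (\<lambda>\<xi>. Complex (fst \<xi>) (snd \<xi>))"
    by (auto simp: symb_Pair complex_norm)
  moreover have "(\<lambda>\<xi>::real \<times> real. Complex (fst \<xi>) (snd \<xi>)) \<in> borel_measurable lborel"
    by (simp, intro borel_measurable_continuous_onI continuous_intros)
  moreover have "(\<lambda>z. cnj z ^ n / z * complex_of_real (exp (- (cmod z)\<^sup>2))) \<in> borel_measurable borel"
    by measurable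
  ultimately show ?thesis
    by (simp only: measurable_comp)
qed

lemma norm_symb_Pair:
  "norm (symb n (a, b)) = cmod (Complex a b) ^ n / cmod (Complex a b) * exp (- (a\<^sup>2 + b\<^sup>2))"
  by (simp add: symb_Pair norm_mult norm_divide norm_power)

lemma power_div_le_inverse_add_power:
  fixes r :: real
  assumes "0 \<le> r"
  shows "r ^ n / r \<le> 1 / r + r ^ n"
proof (cases "r \<le> 1")
  case True
  then have "r ^ n / r \<le> 1 / r"
    using assms by (intro divide_right_mono power_le_one) auto
  then show ?thesis
    using zero_le_power[OF assms, of n] by linarith
next
  case False
  then have "r ^ n / r \<le> r ^ n"
    by (simp add: divide_le_eq mult_le_cancel_left1)
  moreover have "0 \<le> 1 / r"
    using assms by simp
  ultimately show ?thesis
    by linarith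
qed

lemma integrable_symb: "integrable lborel (symb n)"
proof (rule Bochner_Integration.integrable_bound)
  show "integrable lborel (\<lambda>p::real \<times> real. exp (- ((fst p)\<^sup>2 + (snd p)\<^sup>2)) / sqrt ((fst p)\<^sup>2 + (snd p)\<^sup>2)
      + fact n * exp (\<bar>fst p\<bar> + \<bar>snd p\<bar> - ((fst p)\<^sup>2 + (snd p)\<^sup>2)))"
    using integrable_exp_abs_gaussian2[of 1 1]
    by (intro Bochner_Integration.integrable_add integrable_gaussian_div_norm2 integrable_mult_right) simp_all
  show "AE p in lborel. norm (symb n p) \<le> norm (exp (- ((fst p)\<^sup>2 + (snd p)\<^sup>2)) / sqrt ((fst p)\<^sup>2 + (snd p)\<^sup>2)
      + fact n * exp (\<bar>fst p\<bar> + \<bar>snd p\<bar> - ((fst p)\<^sup>2 + (snd p)\<^sup>2)))"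
  proof (intro AE_I2)
    fix p :: "real \<times> real"
    obtain a b where p: "p = (a, b)"
      by fastforce
    define r where "r = cmod (Complex a b)"
    define e where "e = exp (- (a\<^sup>2 + b\<^sup>2))"
    have r: "0 \<le> r" "r = sqrt (a\<^sup>2 + b\<^sup>2)" "r \<le> \<bar>a\<bar> + \<bar>b\<bar>"
      using cmod_le[of "Complex a b"] by (auto simp: r_def complex_norm)
    have "r ^ n / r * e \<le> (1 / r + r ^ n) * e"
      by (intro mult_right_mono power_div_le_inverse_add_power r(1)) (simp add: e_def)
    also have "\<dots> = e / r + r ^ n * e"
      by (simp add: distrib_right)
    also have "r ^ n * e \<le> fact n * exp (\<bar>a\<bar> + \<bar>b\<bar>) * e"
      using power_le_fact_mult_exp[of "\<bar>a\<bar> + \<bar>b\<bar>" n] power_mono[OF r(3) r(1), of n]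
      by (intro mult_right_mono) (auto simp: e_def)
    also have "fact n * exp (\<bar>a\<bar> + \<bar>b\<bar>) * e = fact n * exp (\<bar>a\<bar> + \<bar>b\<bar> - (a\<^sup>2 + b\<^sup>2))"
      by (simp add: e_def mult_exp_exp)
    finally have "r ^ n / r * e \<le> e / r + fact n * exp (\<bar>a\<bar> + \<bar>b\<bar> - (a\<^sup>2 + b\<^sup>2))"
      by simp
    then show "norm (symb n p) \<le> norm (exp (- ((fst p)\<^sup>2 + (snd p)\<^sup>2)) / sqrt ((fst p)\<^sup>2 + (snd p)\<^sup>2)
        + fact n * exp (\<bar>fst p\<bar> + \<bar>snd p\<bar> - ((fst p)\<^sup>2 + (snd p)\<^sup>2)))"
      unfolding p norm_symb_Pair r_def[symmetric] e_def[symmetric] using r(2) by (simp add: e_def)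
  qed
qed measurable

section \<open>Fourier inversion of the symbol\<close>

definition heat_integrand :: "nat \<Rightarrow> real \<Rightarrow> real \<Rightarrow> real \<times> real \<Rightarrow> real \<Rightarrow> complex" where
  "heat_integrand n x y \<xi> t = indicator {1<..} t *\<^sub>R
     (cnj (Complex (fst \<xi>) (snd \<xi>)) ^ Suc n *
      exp (\<i> * of_real (fst \<xi> * x + snd \<xi> * y) - of_real (t * ((fst \<xi>)\<^sup>2 + (snd \<xi>)\<^sup>2))))"

lemma heat_integrand_Pair:
  "heat_integrand n x y (a, b) t = cnj (Complex a b) ^ Suc n * exp (\<i> * of_real (a * x + b * y))
     * of_real (indicator {1<..} t * exp (- ((a\<^sup>2 + b\<^sup>2) * t)))"
  unfolding heat_integrand_def fst_conv snd_conv exp_diff_of_real by (simp add: scaleR_conv_of_real mult_ac)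

lemma symb_mult_exp_eq:
  assumes "0 < a\<^sup>2 + b\<^sup>2"
  shows "symb n (a, b) * exp (\<i> * of_real (a * x + b * y))
    = cnj (Complex a b) ^ Suc n * exp (\<i> * of_real (a * x + b * y)) * of_real (exp (- (a\<^sup>2 + b\<^sup>2)) / (a\<^sup>2 + b\<^sup>2))"
proof -
  have "Complex a b \<noteq> 0"
    using assms by (auto simp: complex_eq_iff)
  moreover have "complex_of_real (a\<^sup>2 + b\<^sup>2) = Complex a b * cnj (Complex a b)"
    by (simp add: complex_mult_cnj)
  ultimately show ?thesis
    by (simp add: symb_Pair field_simps)
qed

lemma has_bochner_integral_heat_integrand:
  "has_bochner_integral lborel (heat_integrand n x y \<xi>) (symb n \<xi> * exp (\<i> * of_real (fst \<xi> * x + snd \<xi> * y)))"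
proof -
  obtain a b where \<xi>: "\<xi> = (a, b)"
    by fastforce
  show ?thesis
  proof (cases "a\<^sup>2 + b\<^sup>2 = 0")
    case True
    then have "a = 0" "b = 0"
      by auto
    then have "heat_integrand n x y \<xi> = (\<lambda>t. 0)" and "symb n \<xi> = 0"
      by (simp_all add: \<xi> heat_integrand_def symb_Pair fun_eq_iff Complex_eq)
    then show ?thesis
      by (simp add: has_bochner_integral_zero)
  next
    case False
    moreover have "0 \<le> a\<^sup>2 + b\<^sup>2"
      by simp
    ultimately have "0 < a\<^sup>2 + b\<^sup>2"
      by linarith
    from has_bochner_integral_mult_right[OF has_bochner_integral_of_real[OF has_bochner_integral_exp_Ioi[OF this]],
        of "cnj (Complex a b) ^ Suc n * exp (\<i> * of_real (a * x + b * y))"]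
    show ?thesis
      unfolding \<xi> fst_conv snd_conv heat_integrand_Pair[abs_def] symb_mult_exp_eq[OF \<open>0 < a\<^sup>2 + b\<^sup>2\<close>] .
  qed
qed

lemma integral_norm_heat_integrand:
  "(\<integral>t. norm (heat_integrand n x y \<xi> t) \<partial>lborel) = norm (symb n \<xi>)"
proof -
  obtain a b where \<xi>: "\<xi> = (a, b)"
    by fastforce
  define A where "A = cnj (Complex a b) ^ Suc n * exp (\<i> * of_real (a * x + b * y))"
  have "norm (heat_integrand n x y \<xi> t) = norm A * (indicator {1<..} t * exp (- ((a\<^sup>2 + b\<^sup>2) * t)))" for t
    by (simp add: \<xi> heat_integrand_Pair A_def norm_mult)
  then have "(\<integral>t. norm (heat_integrand n x y \<xi> t) \<partial>lborel)
      = norm A * (\<integral>t. indicator {1<..} t * exp (- ((a\<^sup>2 + b\<^sup>2) * t)) \<partial>lborel)"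
    by simp
  also have "\<dots> = norm (symb n \<xi>)"
  proof (cases "a\<^sup>2 + b\<^sup>2 = 0")
    case True
    then show ?thesis
      by (simp add: \<xi> A_def symb_Pair Complex_eq)
  next
    case False
    moreover have "0 \<le> a\<^sup>2 + b\<^sup>2"
      by simp
    ultimately have pos: "0 < a\<^sup>2 + b\<^sup>2"
      by linarith
    have "(\<integral>t. indicator {1<..} t * exp (- ((a\<^sup>2 + b\<^sup>2) * t)) \<partial>lborel) = exp (- (a\<^sup>2 + b\<^sup>2)) / (a\<^sup>2 + b\<^sup>2)"
      using has_bochner_integral_exp_Ioi[OF pos] by (simp add: has_bochner_integral_iff)
    then have "norm A * (\<integral>t. indicator {1<..} t * exp (- ((a\<^sup>2 + b\<^sup>2) * t)) \<partial>lborel)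
        = norm (A * of_real (exp (- (a\<^sup>2 + b\<^sup>2)) / (a\<^sup>2 + b\<^sup>2)))"
      using pos by (simp only: norm_mult norm_of_real abs_of_pos divide_pos_pos exp_gt_zero)
    also have "\<dots> = norm (symb n \<xi> * exp (\<i> * of_real (a * x + b * y)))"
      unfolding \<xi> A_def symb_mult_exp_eq[OF pos] ..
    finally show ?thesis
      by (simp add: norm_mult)
  qed
  finally show ?thesis .
qed

lemma integral_heat_integrand_space:
  "(\<integral>\<xi>. heat_integrand n x y \<xi> t \<partial>lborel)
    = pi * (\<i> * cnj (Complex x y) / 2) ^ Suc n
      * of_real (indicator {1<..} t * (exp (- ((x\<^sup>2 + y\<^sup>2) / 4 / t)) / t ^ (n + 2)))"
proof (cases "1 < t")
  case True
  then have t: "0 < t"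
    by simp
  have "(\<lambda>\<xi>. heat_integrand n x y \<xi> t) = (\<lambda>p::real \<times> real. cnj (Complex (fst p) (snd p)) ^ Suc n *
      exp (\<i> * of_real (fst p * x + snd p * y) - of_real (t * ((fst p)\<^sup>2 + (snd p)\<^sup>2))))"
    using True by (simp add: heat_integrand_def)
  then have "(\<integral>\<xi>. heat_integrand n x y \<xi> t \<partial>lborel)
      = of_real (pi / t * exp (- (x\<^sup>2 + y\<^sup>2) / (4 * t))) * (\<i> * cnj (Complex x y) / (2 * t)) ^ Suc n"
    using has_bochner_integral_cnj_power_gaussian2[OF t, of "Suc n" x y] by (simp add: has_bochner_integral_iff)
  also have "\<dots> = pi * (\<i> * cnj (Complex x y) / 2) ^ Suc n
      * of_real (exp (- ((x\<^sup>2 + y\<^sup>2) / 4 / t)) / t ^ (n + 2))"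
    using t by (simp add: power_divide field_simps)
  finally show ?thesis
    using True by simp
next
  case False
  then show ?thesis
    by (simp add: heat_integrand_def)
qed

lemma integrable_heat_integrand:
  "integrable (lborel \<Otimes>\<^sub>M lborel) (\<lambda>(\<xi>, t). heat_integrand n x y \<xi> t)"
proof (rule lborel_pair.Fubini_integrable)
  define C where "C \<xi> = Complex (fst \<xi>) (snd \<xi>)" for \<xi> :: "real \<times> real"
  define N where "N \<xi> = (fst \<xi>)\<^sup>2 + (snd \<xi>)\<^sup>2" for \<xi> :: "real \<times> real"
  define L where "L \<xi> = fst \<xi> * x + snd \<xi> * y" for \<xi> :: "real \<times> real"
  have [measurable]: "C \<in> borel_measurable lborel" "N \<in> borel_measurable lborel" "L \<in> borel_measurable lborel"
    unfolding C_def N_def L_def by (simp_all, (intro borel_measurable_continuous_onI continuous_intros)+)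
  have "(\<lambda>(\<xi>, t). heat_integrand n x y \<xi> t)
      = (\<lambda>(\<xi>, t). indicator {1<..} t *\<^sub>R (cnj (C \<xi>) ^ Suc n * exp (\<i> * of_real (L \<xi>) - of_real (t * N \<xi>))))"
    by (simp add: heat_integrand_def C_def N_def L_def)
  then show "(\<lambda>(\<xi>, t). heat_integrand n x y \<xi> t) \<in> borel_measurable ((lborel :: (real \<times> real) measure) \<Otimes>\<^sub>M lborel)"
    by (simp only:) measurable
  show "integrable lborel (\<lambda>\<xi>. \<integral>t. norm ((\<lambda>(\<xi>, t). heat_integrand n x y \<xi> t) (\<xi>, t)) \<partial>lborel)"
    using integrable_norm[OF integrable_symb[of n]] by (simp add: integral_norm_heat_integrand)
  show "AE \<xi> in lborel. integrable lborel (\<lambda>t. (\<lambda>(\<xi>, t). heat_integrand n x y \<xi> t) (\<xi>, t))"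
    using has_bochner_integral_heat_integrand by (auto simp: has_bochner_integral_iff)
qed

lemma inv_fourier2_symb_eq_radial_integral:
  "inv_fourier2 (symb n) x y = (\<i> * cnj (Complex x y) / 2) ^ Suc n / 2
     * of_real (\<integral>t. indicator {1<..} t * (exp (- ((x\<^sup>2 + y\<^sup>2) / 4 / t)) / t ^ (n + 2)) \<partial>lborel)"
proof -
  have "inv_fourier2 (symb n) x y
      = of_real (1 / (2 * pi)) * (\<integral>\<xi>. symb n \<xi> * exp (\<i> * of_real (fst \<xi> * x + snd \<xi> * y)) \<partial>lborel)"
    by (simp add: inv_fourier2_def case_prod_beta')
  also have "\<dots> = of_real (1 / (2 * pi)) * (\<integral>\<xi>. \<integral>t. heat_integrand n x y \<xi> t \<partial>lborel \<partial>lborel)"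
    using has_bochner_integral_heat_integrand by (simp add: has_bochner_integral_iff)
  also have "\<dots> = of_real (1 / (2 * pi)) * (\<integral>t. \<integral>\<xi>. heat_integrand n x y \<xi> t \<partial>lborel \<partial>lborel)"
    using lborel_pair.Fubini_integral[OF integrable_heat_integrand] by simp
  also have "\<dots> = of_real (1 / (2 * pi)) * (pi * (\<i> * cnj (Complex x y) / 2) ^ Suc n
      * of_real (\<integral>t. indicator {1<..} t * (exp (- ((x\<^sup>2 + y\<^sup>2) / 4 / t)) / t ^ (n + 2)) \<partial>lborel))"
    by (simp only: integral_heat_integrand_space integral_mult_right_zero integral_complex_of_real)
  also have "\<dots> = (\<i> * cnj (Complex x y) / 2) ^ Suc n / 2
     * of_real (\<integral>t. indicator {1<..} t * (exp (- ((x\<^sup>2 + y\<^sup>2) / 4 / t)) / t ^ (n + 2)) \<partial>lborel)"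
    by simp
  finally show ?thesis .
qed

lemma cnj_power_div_norm_power:
  fixes z :: complex
  assumes z: "z \<noteq> 0"
  shows "(\<i> * cnj z / 2) ^ Suc n / 2 * (of_nat (fact n) / (z * cnj z / 4) ^ (n + 1))
    = \<i> * (2 * \<i>) ^ n * of_nat (fact n) / z ^ (n + 1)"
proof -
  have "cnj z \<noteq> 0"
    using z by simp
  then have "(\<i> * cnj z / 2) / (z * cnj z / 4) = 2 * \<i> / z"
    using z by (simp add: divide_simps)
  then have quotient: "(\<i> * cnj z / 2) ^ Suc n / (z * cnj z / 4) ^ Suc n = (2 * \<i>) ^ Suc n / z ^ Suc n"
    by (simp only: power_divide[symmetric])
  have "(\<i> * cnj z / 2) ^ Suc n / 2 * (of_nat (fact n) / (z * cnj z / 4) ^ (n + 1))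
      = (\<i> * cnj z / 2) ^ Suc n / (z * cnj z / 4) ^ Suc n * of_nat (fact n) / 2"
    by simp
  also have "\<dots> = (2 * \<i>) ^ Suc n / z ^ Suc n * of_nat (fact n) / 2"
    by (simp only: quotient)
  also have "\<dots> = \<i> * (2 * \<i>) ^ n * of_nat (fact n) / z ^ (n + 1)"
    by simp
  finally show ?thesis .
qed

lemma
  fixes x y :: real
  shows Complex_mult_cnj_div_4: "Complex x y * cnj (Complex x y) / 4 = complex_of_real ((x\<^sup>2 + y\<^sup>2) / 4)"
    and exp_cmod_Complex_square_div_4: "exp (- (cmod (Complex x y))\<^sup>2 / 4) = exp (- ((x\<^sup>2 + y\<^sup>2) / 4))"
proof -
  show "Complex x y * cnj (Complex x y) / 4 = complex_of_real ((x\<^sup>2 + y\<^sup>2) / 4)"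
    by (simp add: complex_mult_cnj)
  have "(cmod (Complex x y))\<^sup>2 = x\<^sup>2 + y\<^sup>2"
    unfolding cmod_power2 by simp
  then have "- (cmod (Complex x y))\<^sup>2 / 4 = - ((x\<^sup>2 + y\<^sup>2) / 4)"
    by (simp add: minus_divide_left)
  then show "exp (- (cmod (Complex x y))\<^sup>2 / 4) = exp (- ((x\<^sup>2 + y\<^sup>2) / 4))"
    by (rule arg_cong)
qed

lemma suminf_of_real_power_div_fact_shift:
  fixes a :: real
  assumes "a \<noteq> 0"
  shows "(\<Sum>k. 1 / of_nat (fact (k + n + 1)) * complex_of_real a ^ k) = of_real (\<Sum>k. a ^ k / fact (k + n + 1))"
proof -
  have "(\<lambda>k. a ^ k / fact (k + n + 1)) sums (\<Sum>k. a ^ k / fact (k + n + 1))"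
    using sums_power_div_fact_shift[OF assms, of n] by (simp add: sums_iff)
  then have "(\<lambda>k. complex_of_real (a ^ k / fact (k + n + 1))) sums of_real (\<Sum>k. a ^ k / fact (k + n + 1))"
    by (rule sums_of_real)
  moreover have "complex_of_real (a ^ k / fact m) = 1 / of_nat (fact m) * complex_of_real a ^ k" for k m
    by (simp add: divide_inverse mult.commute)
  ultimately show ?thesis
    by (simp only: sums_iff)
qed

lemma power_Suc_i_mult_half:
  fixes c :: complex
  shows "(\<i> * c / 2) ^ Suc n / 2 = \<i> * (2 * \<i>) ^ n * (c / 4) ^ (n + 1)"
proof -
  have "\<i> * c / 2 = (2 * \<i>) * (c / 4)"
    by simp
  then have "(\<i> * c / 2) ^ Suc n = (2 * \<i>) ^ Suc n * (c / 4) ^ Suc n"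
    by (simp only: power_mult_distrib)
  then show ?thesis
    by (simp add: mult_ac)
qed

lemma inv_fourier2_symb:
  fixes x y :: real
  defines "z \<equiv> Complex x y"
  assumes nz: "z \<noteq> 0"
  shows "inv_fourier2 (symb n) x y = \<i> * (2 * \<i>) ^ n * of_nat (fact n) / z ^ (n + 1) *
    (1 - complex_of_real (exp (- (cmod z)\<^sup>2 / 4)) * (\<Sum>k = 0..n. 1 / of_nat (fact k) * (z * cnj z / 4) ^ k))"
proof -
  define a where "a = (x\<^sup>2 + y\<^sup>2) / 4"
  have a: "0 < a"
    using nz by (simp add: a_def z_def complex_eq_iff sum_power2_gt_zero_iff)
  have za: "z * cnj z / 4 = of_real a" and cmod_z: "exp (- (cmod z)\<^sup>2 / 4) = exp (- a)"
    unfolding z_def a_def by (rule Complex_mult_cnj_div_4 exp_cmod_Complex_square_div_4)+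
  have "(\<integral>t. indicator {1<..} t * (exp (- (a / t)) / t ^ (n + 2)) \<partial>lborel)
      = fact n / a ^ (n + 1) * (1 - exp (- a) * (\<Sum>k\<le>n. a ^ k / fact k))"
    using has_bochner_integral_exp_div_power_Ioi[OF a, of n] by (simp add: has_bochner_integral_iff)
  with inv_fourier2_symb_eq_radial_integral[of n x y] have "inv_fourier2 (symb n) x y
      = (\<i> * cnj z / 2) ^ Suc n / 2 * of_real (fact n / a ^ (n + 1) * (1 - exp (- a) * (\<Sum>k\<le>n. a ^ k / fact k)))"
    by (simp only: z_def a_def)
  also have "\<dots> = (\<i> * cnj z / 2) ^ Suc n / 2 * (of_nat (fact n) / (z * cnj z / 4) ^ (n + 1))
      * (1 - of_real (exp (- a)) * (\<Sum>k = 0..n. 1 / of_nat (fact k) * (z * cnj z / 4) ^ k))"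
  proof -
    have "complex_of_real (a ^ k / fact k) = 1 / of_nat (fact k) * (of_real a) ^ k" for k
      by (simp add: field_simps)
    then have "(\<Sum>k = 0..n. 1 / of_nat (fact k) * (z * cnj z / 4) ^ k) = of_real (\<Sum>k\<le>n. a ^ k / fact k)"
      by (simp add: za atLeast0AtMost)
    then show ?thesis
      by (simp add: za)
  qed
  also have "\<dots> = \<i> * (2 * \<i>) ^ n * of_nat (fact n) / z ^ (n + 1) *
    (1 - complex_of_real (exp (- (cmod z)\<^sup>2 / 4)) * (\<Sum>k = 0..n. 1 / of_nat (fact k) * (z * cnj z / 4) ^ k))"
    unfolding cnj_power_div_norm_power[OF nz] cmod_z ..
  finally show ?thesis .
qed

lemma inv_fourier2_symb_series:
  fixes x y :: real
  defines "z \<equiv> Complex x y"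
  shows "inv_fourier2 (symb n) x y = \<i> * (2 * \<i>) ^ n * of_nat (fact n) * complex_of_real (exp (- (cmod z)\<^sup>2 / 4)) *
    (cnj z / 4) ^ (n + 1) * (\<Sum>k. 1 / of_nat (fact (k + n + 1)) * (z * cnj z / 4) ^ k)"
proof (cases "z = 0")
  case True
  then have "cnj z = 0"
    by simp
  moreover from this have "inv_fourier2 (symb n) x y = 0"
    using inv_fourier2_symb_eq_radial_integral[of n x y, folded z_def] by simp
  ultimately show ?thesis
    by simp
next
  case False
  define a where "a = (x\<^sup>2 + y\<^sup>2) / 4"
  define T where "T = (\<Sum>k. a ^ k / fact (k + n + 1))"
  have a: "0 < a"
    using False by (simp add: a_def z_def complex_eq_iff sum_power2_gt_zero_iff)
  have za: "z * cnj z / 4 = of_real a" and cmod_z: "exp (- (cmod z)\<^sup>2 / 4) = exp (- a)"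
    unfolding z_def a_def by (rule Complex_mult_cnj_div_4 exp_cmod_Complex_square_div_4)+
  have of_real_fact: "complex_of_real (fact n) = of_nat (fact n)"
    by simp
  have "(\<integral>t. indicator {1<..} t * (exp (- (a / t)) / t ^ (n + 2)) \<partial>lborel) = fact n * exp (- a) * T"
    using has_bochner_integral_exp_div_power_Ioi_series[OF a, of n] by (simp add: has_bochner_integral_iff T_def)
  then have "inv_fourier2 (symb n) x y = (\<i> * cnj z / 2) ^ Suc n / 2 * of_real (fact n * exp (- a) * T)"
    using inv_fourier2_symb_eq_radial_integral[of n x y] by (simp only: z_def a_def)
  also have "\<dots> = \<i> * (2 * \<i>) ^ n * (cnj z / 4) ^ (n + 1) * (of_nat (fact n) * of_real (exp (- a)) * of_real T)"
    by (simp only: power_Suc_i_mult_half of_real_mult of_real_fact)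
  also have "\<dots> = \<i> * (2 * \<i>) ^ n * of_nat (fact n) * complex_of_real (exp (- (cmod z)\<^sup>2 / 4)) *
      (cnj z / 4) ^ (n + 1) * (\<Sum>k. 1 / of_nat (fact (k + n + 1)) * (z * cnj z / 4) ^ k)"
    unfolding za cmod_z suminf_of_real_power_div_fact_shift[OF a[THEN less_imp_neq, symmetric]] T_def
    by (simp only: mult_ac)
  finally show ?thesis .
qed

theorem mainTheorem2:
  shows "(\<forall>x y::real. Complex x y \<noteq> 0 \<longrightarrow>
           inv_fourier2 (\<lambda>(\<xi>1, \<xi>2). 1 / Complex \<xi>1 \<xi>2 * complex_of_real (exp (- (\<xi>1\<^sup>2 + \<xi>2\<^sup>2)))) x y
           = \<i> / Complex x y * (1 - complex_of_real (exp (- (x\<^sup>2 + y\<^sup>2) / 4)))) \<and>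
          (\<forall>(n::nat) (x::real) (y::real). Complex x y \<noteq> 0 \<longrightarrow>
           (let z = Complex x y in
            inv_fourier2 (symb n) x y
            = \<i> * (2 * \<i>) ^ n * of_nat (fact n) / z ^ (n + 1) *
              (1 - complex_of_real (exp (- (cmod z)\<^sup>2 / 4)) *
                   (\<Sum>k = 0..n. 1 / of_nat (fact k) * (z * cnj z / 4) ^ k)))) \<and>
          (\<forall>(n::nat) (x::real) (y::real).
           (let z = Complex x y in
            inv_fourier2 (symb n) x y
            = \<i> * (2 * \<i>) ^ n * of_nat (fact n) * complex_of_real (exp (- (cmod z)\<^sup>2 / 4)) *
              (cnj z / 4) ^ (n + 1) *
              (\<Sum>k. 1 / of_nat (fact (k + n + 1)) * (z * cnj z / 4) ^ k)))"
proof -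
  have symb_0: "(\<lambda>(\<xi>1, \<xi>2). 1 / Complex \<xi>1 \<xi>2 * complex_of_real (exp (- (\<xi>1\<^sup>2 + \<xi>2\<^sup>2)))) = symb 0"
    by (simp add: symb_def)
  have "inv_fourier2 (symb 0) x y = \<i> / Complex x y * (1 - complex_of_real (exp (- (x\<^sup>2 + y\<^sup>2) / 4)))"
    if "Complex x y \<noteq> 0" for x y
  proof -
    have "(cmod (Complex x y))\<^sup>2 = x\<^sup>2 + y\<^sup>2"
      by (simp add: complex_norm)
    then show ?thesis
      using inv_fourier2_symb[OF that, where n = 0] by simp
  qed
  then show ?thesis
    unfolding Let_def symb_0 using inv_fourier2_symb inv_fourier2_symb_series by blast
qed

end
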